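(* Let $\mathcal{A}$ be a strong $T_0$-family. Then for every uncountable pairwise disjoint family $\mathcal{F}$ of finite subsets of $\omega_1$ there are distinct $A,B\in\mathcal{F}$ such that $(A\otimes B)\cap\mathcal{A}=\emptyset$, and there are distinct $A,B\in\mathcal{F}$ such that $A\otimes B\subseteq\mathcal{A}$. Moreover, every finite set $C\subseteq\omega_1$ such that $[C]^2\subseteq\mathcal{A}$ is itself an element of $\mathcal{A}$.
   Context: For disjoint sets $A,B$, $A\otimes B=\{\{\alpha,\beta\}:\alpha\in A,\beta\in B\}$; $[X]^n$ is the family of $n$-element subsets of $X$ and $[X]^{<\omega}$ the family of finite subsets. A function $c=(c_0,c_1):[\omega_1]^2\to I\times J$ with $0,1\in I$, $J\ne\emptyset$, is a $T$-coloring if for every uncountable pairwise disjoint family $\{\{a_\xi(0),a_\xi(1)\}:\xi<\omega_1\}$ of pairs of $\omega_1$ and all $(i_0,j_0),(i_1,j_1)\in I\times J$ there are $\xi<\eta<\omega_1$ with $c(\{a_\xi(0),a_\eta(0)\})=(i_0,j_0)$ and $c(\{a_\xi(1),a_\eta(1)\})=(i_1,j_1)$. It is a strong $T$-coloring if moreover for every uncountable pairwise disjoint family $\{A_\xi:\xi<\omega_1\}$ of finite subsets of $\omega_1$ there are $\xi<\eta$ with $c_0[A_\xi\otimes A_\eta]=\{0\}$ and there are $\xi<\eta$ with $c_0[A_\xi\otimes A_\eta]=\{1\}$. For such $c$, $\mathcal{A}_c=\{a\in[\omega_1]^{<\omega}:c_0[[a]^2]\subseteq\{0\}\}$; a strong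 $T_0$-family is a family of the form $\mathcal{A}_c$ for a strong $T$-coloring $c$. *)

theory Defs
  imports Main "HOL-Library.Countable_Set"
begin

text \<open>omega_1 is modelled as a well-ordered type whose universe is uncountable
  and all of whose proper initial segments are countable.\<close>

definition is_omega1_type :: "'a::wellorder itself \<Rightarrow> bool" where
  "is_omega1_type _ \<longleftrightarrow> \<not> countable (UNIV :: 'a set) \<and> (\<forall>x::'a. countable {..<x})"

definition tensor :: "'a set \<Rightarrow> 'a set \<Rightarrow> 'a set set" where
  "tensor A B = {{\<alpha>, \<beta>} | \<alpha> \<beta>. \<alpha> \<in> A \<and> \<beta> \<in> B}"

definition nsubsets :: "'a set \<Rightarrow> nat \<Rightarrow> 'a set set" where
  "nsubsets X n = {p. p \<subseteq> X \<and> finite p \<and> card p = n}"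

definition T_coloring :: "('a::wellorder set \<Rightarrow> 'i::zero_neq_one \<times> 'j) \<Rightarrow> 'i set \<Rightarrow> 'j set \<Rightarrow> bool" where
  "T_coloring c I J \<longleftrightarrow> 0 \<in> I \<and> 1 \<in> I \<and> J \<noteq> {} \<and>
     (\<forall>p \<in> nsubsets UNIV 2. c p \<in> I \<times> J) \<and>
     (\<forall>a0 a1 :: 'a \<Rightarrow> 'a.
        (\<forall>\<xi>. a0 \<xi> \<noteq> a1 \<xi>) \<and>
        (\<forall>\<xi> \<eta>. \<xi> \<noteq> \<eta> \<longrightarrow> {a0 \<xi>, a1 \<xi>} \<inter> {a0 \<eta>, a1 \<eta>} = {}) \<longrightarrow>
        (\<forall>i0\<in>I. \<forall>j0\<in>J. \<forall>i1\<in>I. \<forall>j1\<in>J.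
           \<exists>\<xi> \<eta>. \<xi> < \<eta> \<and> c {a0 \<xi>, a0 \<eta>} = (i0, j0) \<and> c {a1 \<xi>, a1 \<eta>} = (i1, j1)))"

definition strong_T_coloring :: "('a::wellorder set \<Rightarrow> 'i::zero_neq_one \<times> 'j) \<Rightarrow> 'i set \<Rightarrow> 'j set \<Rightarrow> bool" where
  "strong_T_coloring c I J \<longleftrightarrow> T_coloring c I J \<and>
     (\<forall>A :: 'a \<Rightarrow> 'a set.
        inj A \<and> (\<forall>\<xi>. finite (A \<xi>)) \<and> (\<forall>\<xi> \<eta>. \<xi> \<noteq> \<eta> \<longrightarrow> A \<xi> \<inter> A \<eta> = {}) \<longrightarrow>
        (\<exists>\<xi> \<eta>. \<xi> < \<eta> \<and> (\<lambda>p. fst (c p)) ` tensor (A \<xi>) (A \<eta>) = {0}) \<and>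
        (\<exists>\<xi> \<eta>. \<xi> < \<eta> \<and> (\<lambda>p. fst (c p)) ` tensor (A \<xi>) (A \<eta>) = {1}))"

definition A_fam :: "('a set \<Rightarrow> 'i::zero \<times> 'j) \<Rightarrow> 'a set set" where
  "A_fam c = {a. finite a \<and> (\<lambda>p. fst (c p)) ` nsubsets a 2 \<subseteq> {0}}"

end

theory Submission
  imports Defs
begin

text \<open>A cross pair \<open>{\<alpha>, \<beta>}\<close> of two disjoint sets is a genuine two-element set, so it lies
  in \<open>\<A>\<^sub>c\<close> exactly when its \<open>c\<^sub>0\<close>-colour is 0. Hence the two halves of the strong
  \<open>T\<close>-property, applied to an \<open>\<omega>\<^sub>1\<close>-enumeration of the uncountable family, give the two pairs
  of members. Closure under finite cliques holds because membership in \<open>\<A>\<^sub>c\<close> is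
  itself a condition on two-element subsets.\<close>

lemma inj_into_uncountable:
  fixes F :: "'b set"
  assumes segments: "\<forall>x::'a::wellorder. countable {..<x}" and unc: "\<not> countable F"
  shows "\<exists>f :: 'a \<Rightarrow> 'b. inj f \<and> range f \<subseteq> F"
proof -
  let ?R = "{(x, y). x < (y::'a)}"
  define f where "f = wfrec ?R (\<lambda>g x. SOME y. y \<in> F \<and> y \<notin> g ` {..<x})"
  have f_eq: "f x = (SOME y. y \<in> F \<and> y \<notin> f ` {..<x})" for x
  proof -
    have "cut f ?R x ` {..<x} = f ` {..<x}"
      by (auto simp: cut_apply intro!: image_cong)
    then show ?thesis
      unfolding f_def by (subst wfrec[OF wellorder_class.wf]) simp
  qed
  have fresh: "f x \<in> F \<and> f x \<notin> f ` {..<x}" for x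
  proof -
    have "countable (f ` {..<x})" using segments by simp
    then have "\<exists>y. y \<in> F \<and> y \<notin> f ` {..<x}"
      using unc by (metis countable_subset subsetI)
    then show ?thesis unfolding f_eq[of x] by (rule someI_ex)
  qed
  have "inj f"
  proof (rule injI)
    fix x y assume "f x = f y"
    with fresh[of x] fresh[of y] show "x = y"
      by (metis imageI lessThan_iff linorder_neqE)
  qed
  moreover have "range f \<subseteq> F" using fresh by auto
  ultimately show ?thesis by blast
qed

lemma strong_T_coloring_homogeneous_pair:
  fixes c :: "'a::wellorder set \<Rightarrow> 'i::zero_neq_one \<times> 'j"
  assumes segments: "\<forall>x::'a. countable {..<x}"
    and strong: "strong_T_coloring c I J"
    and F: "\<not> countable F" "\<forall>A\<in>F. finite A" "pairwise disjnt F"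
    and i: "i \<in> {0, 1}"
  shows "\<exists>A\<in>F. \<exists>B\<in>F. A \<noteq> B \<and> (\<lambda>p. fst (c p)) ` tensor A B = {i}"
proof -
  obtain f :: "'a \<Rightarrow> 'a set" where "inj f" and f_in: "range f \<subseteq> F"
    using inj_into_uncountable[OF segments F(1)] by blast
  have finite: "\<forall>\<xi>. finite (f \<xi>)"
    using f_in F(2) by auto
  have disjoint: "\<forall>\<xi> \<eta>. \<xi> \<noteq> \<eta> \<longrightarrow> f \<xi> \<inter> f \<eta> = {}"
    using \<open>inj f\<close> f_in F(3) by (auto simp: inj_eq pairwise_def disjnt_def image_subset_iff)
  have "(\<exists>\<xi> \<eta>. \<xi> < \<eta> \<and> (\<lambda>p. fst (c p)) ` tensor (f \<xi>) (f \<eta>) = {0}) \<and>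
      (\<exists>\<xi> \<eta>. \<xi> < \<eta> \<and> (\<lambda>p. fst (c p)) ` tensor (f \<xi>) (f \<eta>) = {1})"
    using strong[unfolded strong_T_coloring_def, THEN conjunct2, rule_format, of f]
      \<open>inj f\<close> finite disjoint by blast
  then obtain \<xi> \<eta> where "\<xi> < \<eta>" "(\<lambda>p. fst (c p)) ` tensor (f \<xi>) (f \<eta>) = {i}"
    using i by blast
  moreover have "f \<xi> \<noteq> f \<eta>"
    using \<open>\<xi> < \<eta>\<close> \<open>inj f\<close> by (auto simp: inj_eq)
  moreover have "f \<xi> \<in> F" "f \<eta> \<in> F"
    using f_in by auto
  ultimately show ?thesis
    by (intro bexI[of _ "f \<xi>"] bexI[of _ "f \<eta>"] conjI)
qed

lemma pair_mem_A_fam_iff: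
  assumes "a \<noteq> b"
  shows "{a, b} \<in> A_fam c \<longleftrightarrow> fst (c {a, b}) = 0"
proof -
  have "nsubsets {a, b} 2 = {{a, b}}"
    using assms unfolding nsubsets_def by (auto simp: card_2_iff)
  then show ?thesis by (simp add: A_fam_def)
qed

lemma tensor_mem_A_fam_iff:
  assumes "disjnt A B" and "p \<in> tensor A B"
  shows "p \<in> A_fam c \<longleftrightarrow> fst (c p) = 0"
proof -
  obtain a b where p: "p = {a, b}" and "a \<in> A" "b \<in> B"
    using assms(2) unfolding tensor_def by blast
  then have "a \<noteq> b"
    using assms(1) by (auto simp: disjnt_def)
  then show ?thesis
    unfolding p by (rule pair_mem_A_fam_iff)
qed

lemma tensor_subset_A_fam:
  assumes "disjnt A B" and "(\<lambda>p. fst (c p)) ` tensor A B = {0}"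
  shows "tensor A B \<subseteq> A_fam c"
proof
  fix p assume p: "p \<in> tensor A B"
  then have "fst (c p) = 0"
    using assms(2) by blast
  then show "p \<in> A_fam c"
    using tensor_mem_A_fam_iff[OF assms(1) p, of c] by simp
qed

lemma tensor_disjoint_A_fam:
  fixes c :: "'a set \<Rightarrow> 'i::zero_neq_one \<times> 'j"
  assumes "disjnt A B" and "(\<lambda>p. fst (c p)) ` tensor A B = {1}"
  shows "tensor A B \<inter> A_fam c = {}"
proof -
  have "p \<notin> A_fam c" if p: "p \<in> tensor A B" for p
  proof -
    have "fst (c p) = 1"
      using p assms(2) by blast
    then show ?thesis
      using tensor_mem_A_fam_iff[OF assms(1) p, of c] by simp
  qed
  then show ?thesis by blast
qed

lemma A_fam_iff_nsubsets_2:
  assumes "finite C"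
  shows "C \<in> A_fam c \<longleftrightarrow> nsubsets C 2 \<subseteq> A_fam c"
proof
  assume "C \<in> A_fam c"
  then show "nsubsets C 2 \<subseteq> A_fam c"
    by (auto simp: A_fam_def nsubsets_def)
next
  assume pairs: "nsubsets C 2 \<subseteq> A_fam c"
  have "fst (c p) = 0" if "p \<in> nsubsets C 2" for p
  proof -
    have "p \<in> nsubsets p 2" using that by (simp add: nsubsets_def)
    then show ?thesis using pairs that unfolding A_fam_def by blast
  qed
  then show "C \<in> A_fam c" using assms by (auto simp: A_fam_def)
qed

theorem lemma2p12:
  fixes c :: "'a::wellorder set \<Rightarrow> 'i::zero_neq_one \<times> 'j"
    and I :: "'i set" and J :: "'j set" and \<A> :: "'a set set"
  assumes "is_omega1_type TYPE('a)"
    and "strong_T_coloring c I J"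
    and "\<A> = A_fam c"
  shows "(\<forall>F :: 'a set set. \<not> countable F \<and> (\<forall>A\<in>F. finite A) \<and> pairwise disjnt F \<longrightarrow>
            (\<exists>A\<in>F. \<exists>B\<in>F. A \<noteq> B \<and> tensor A B \<inter> \<A> = {}) \<and>
            (\<exists>A\<in>F. \<exists>B\<in>F. A \<noteq> B \<and> tensor A B \<subseteq> \<A>))
       \<and> (\<forall>C :: 'a set. finite C \<and> nsubsets C 2 \<subseteq> \<A> \<longrightarrow> C \<in> \<A>)"
proof (intro conjI allI impI)
  fix F :: "'a set set"
  assume F: "\<not> countable F \<and> (\<forall>A\<in>F. finite A) \<and> pairwise disjnt F"
  have "\<forall>x::'a. countable {..<x}"
    using assms(1) by (simp add: is_omega1_type_def)
  note homogeneous = strong_T_coloring_homogeneous_pair[OF this assms(2)]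
  show "\<exists>A\<in>F. \<exists>B\<in>F. A \<noteq> B \<and> tensor A B \<inter> \<A> = {}"
  proof -
    obtain A B where AB: "A \<in> F" "B \<in> F" "A \<noteq> B"
      and "(\<lambda>p. fst (c p)) ` tensor A B = {1}"
      using homogeneous[of F 1] F by auto
    moreover have "disjnt A B"
      using F AB by (blast dest: pairwiseD)
    ultimately have "tensor A B \<inter> \<A> = {}"
      unfolding assms(3) by (intro tensor_disjoint_A_fam)
    then show ?thesis using AB by blast
  qed
  show "\<exists>A\<in>F. \<exists>B\<in>F. A \<noteq> B \<and> tensor A B \<subseteq> \<A>"
  proof -
    obtain A B where AB: "A \<in> F" "B \<in> F" "A \<noteq> B"
      and "(\<lambda>p. fst (c p)) ` tensor A B = {0}"
      using homogeneous[of F 0] F by auto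
    moreover have "disjnt A B"
      using F AB by (blast dest: pairwiseD)
    ultimately have "tensor A B \<subseteq> \<A>"
      unfolding assms(3) by (intro tensor_subset_A_fam)
    then show ?thesis using AB by blast
  qed
next
  fix C :: "'a set"
  assume "finite C \<and> nsubsets C 2 \<subseteq> \<A>"
  then show "C \<in> \<A>"
    using A_fam_iff_nsubsets_2 assms(3) by blast
qed

end
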